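(* Let $V\subseteq\mathcal V$ be finite and let $\mathcal E,\mathcal F\in \mathit{DProg}(V)$. Then: (1) $\mathcal E\le_T^e\mathcal F$ if and only if $\mathcal E\sqsubseteq\mathcal F$; (2) $\mathcal E\le_P^e\mathcal F$ if and only if $\mathcal F\sqsubseteq\mathcal E$; (3) $\mathcal E\equiv_T^e\mathcal F$ iff $\mathcal E\equiv_P^e\mathcal F$ iff $\mathcal E=\mathcal F$; (4) if both $\mathcal E$ and $\mathcal F$ are trace-preserving, then $\mathcal E\le_T^e\mathcal F$ iff $\mathcal E\le_P^e\mathcal F$ iff $\mathcal E=\mathcal F$.
   Context: $\mathcal V$ is a countably infinite set of quantum variables, each $q\in\mathcal V$ with state space $\mathcal H_q=\mathbb C^2$; for finite $V\subseteq\mathcal V$, $\mathcal H_V=\bigotimes_{q\in V}\mathcal H_q$ with identity $I_V$. $\mathcal D(\mathcal H)$ denotes partial density operators (positive operators of trace $\le 1$), $\mathcal P(\mathcal H)$ effects (positive operators with eigenvalues in $[0,1]$), and $\sqsubseteq$ the Löwner order on operators ($A\sqsubseteq B$ iff $B-A$ is positive). $\mathit{DProg}(V)$ is the set of completely positive trace-nonincreasing (CPTN) super-operators on $\mathcal L(\mathcal H_V)$; for $\mathcal E,\mathcal F\in\mathit{DProg}(V)$, $\mathcal E\sqsubseteq\mathcal F$ means that $\mathcal F-\mathcal E$ is completely positive. Convention: operators and super-operators on a subsystem are implicitly extended to a larger system by tensoring with the identity operator / identity super-operator. Correctness: for finite $W\subseteq\mathcal V$ and $M,N\in\mathcal P(\mathcal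 H_W)$, $\mathcal E\models_{tot}(M,N)$ means that for every finite $X\supseteq V\cup W$ and every $\rho\in\mathcal D(\mathcal H_X)$, ${\rm tr}(M\rho)\le{\rm tr}(N\mathcal E(\rho))$; $\mathcal E\models_{par}(M,N)$ means that for all such $X,\rho$, ${\rm tr}(M\rho)\le{\rm tr}(N\mathcal E(\rho))+{\rm tr}(\rho)-{\rm tr}(\mathcal E(\rho))$. Refinement: $\mathcal E\le_T^e\mathcal F$ iff for every finite $W\subseteq\mathcal V$ and all $M,N\in\mathcal P(\mathcal H_W)$, $\mathcal E\models_{tot}(M,N)$ implies $\mathcal F\models_{tot}(M,N)$; $\mathcal E\le_P^e\mathcal F$ is defined the same way with $\models_{par}$. $\mathcal E\equiv_T^e\mathcal F$ means $\mathcal E\le_T^e\mathcal F$ and $\mathcal F\le_T^e\mathcal E$; similarly $\equiv_P^e$. *)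

theory Defs
  imports Complex_Main
begin

text \<open>Quantum variables are natural numbers (a countably infinite set), each a qubit.
  The computational basis of H_X (X finite) is indexed by the assignments
  sigma :: nat => bool that are False outside X.  Operators on H_X are matrices
  indexed by such assignments (entries outside are required to be zero).
  This avoids any ordering of tensor factors: extension of an operator to a
  larger register is tensoring with the identity.\<close>

type_synonym asg = "nat \<Rightarrow> bool"
type_synonym op = "asg \<Rightarrow> asg \<Rightarrow> complex"
text \<open>A super-operator on L(H_V) is given by its matrix (kernel) K with
  E(A) s t = sum over s' t' of K s t s' t' * A s' t'.\<close>
type_synonym sop = "asg \<Rightarrow> asg \<Rightarrow> asg \<Rightarrow> asg \<Rightarrow> complex"

definition asgs :: "nat set \<Rightarrow> asg set" where
  "asgs X = {s. \<forall>q. q \<notin> X \<longrightarrow> s q = False}"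

definition restr :: "nat set \<Rightarrow> asg \<Rightarrow> asg" where
  "restr W s = (\<lambda>q. if q \<in> W then s q else False)"

definition agree :: "nat set \<Rightarrow> asg \<Rightarrow> asg \<Rightarrow> bool" where
  "agree R s t \<longleftrightarrow> (\<forall>q\<in>R. s q = t q)"

definition is_op :: "nat set \<Rightarrow> op \<Rightarrow> bool" where
  "is_op X A \<longleftrightarrow> (\<forall>s t. s \<notin> asgs X \<or> t \<notin> asgs X \<longrightarrow> A s t = 0)"

definition idop :: "nat set \<Rightarrow> op" where
  "idop X = (\<lambda>s t. if s \<in> asgs X \<and> s = t then 1 else 0)"

definition opmult :: "nat set \<Rightarrow> op \<Rightarrow> op \<Rightarrow> op" where
  "opmult X A B = (\<lambda>s t. \<Sum>u\<in>asgs X. A s u * B u t)"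

definition tr :: "nat set \<Rightarrow> op \<Rightarrow> complex" where
  "tr X A = (\<Sum>s\<in>asgs X. A s s)"

definition psd :: "nat set \<Rightarrow> op \<Rightarrow> bool" where
  "psd X A \<longleftrightarrow> is_op X A \<and>
     (\<forall>\<psi> :: asg \<Rightarrow> complex.
        Im (\<Sum>s\<in>asgs X. \<Sum>t\<in>asgs X. cnj (\<psi> s) * A s t * \<psi> t) = 0 \<and>
        Re (\<Sum>s\<in>asgs X. \<Sum>t\<in>asgs X. cnj (\<psi> s) * A s t * \<psi> t) \<ge> 0)"

definition is_pdo :: "nat set \<Rightarrow> op \<Rightarrow> bool" where
  "is_pdo X \<rho> \<longleftrightarrow> psd X \<rho> \<and> Re (tr X \<rho>) \<le> 1"

definition is_effect :: "nat set \<Rightarrow> op \<Rightarrow> bool" where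
  "is_effect X M \<longleftrightarrow> psd X M \<and> psd X (\<lambda>s t. idop X s t - M s t)"

text \<open>Extension of an operator A on H_W to H_X (W \<subseteq> X): A \<otimes> I_{X-W}.\<close>
definition ext_op :: "nat set \<Rightarrow> nat set \<Rightarrow> op \<Rightarrow> op" where
  "ext_op W X A = (\<lambda>s t. if s \<in> asgs X \<and> t \<in> asgs X \<and> agree (X - W) s t
                          then A (restr W s) (restr W t) else 0)"

text \<open>Action of the super-operator K on L(H_V), extended to H_X (V \<subseteq> X) by
  tensoring with the identity super-operator on L(H_{X-V}).\<close>
definition apply_sop :: "nat set \<Rightarrow> nat set \<Rightarrow> sop \<Rightarrow> op \<Rightarrow> op" where
  "apply_sop V X K A = (\<lambda>s t. if s \<in> asgs X \<and> t \<in> asgs X then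
      (\<Sum>s'\<in>asgs X. \<Sum>t'\<in>asgs X.
         if agree (X - V) s s' \<and> agree (X - V) t t'
         then K (restr V s) (restr V t) (restr V s') (restr V t') * A s' t' else 0)
    else 0)"

definition is_sop :: "nat set \<Rightarrow> sop \<Rightarrow> bool" where
  "is_sop V K \<longleftrightarrow> (\<forall>a b c d. a \<notin> asgs V \<or> b \<notin> asgs V \<or> c \<notin> asgs V \<or> d \<notin> asgs V
                       \<longrightarrow> K a b c d = 0)"

text \<open>Complete positivity: K \<otimes> id_R maps positive operators to positive operators
  for every reference register R (any finite X \<supseteq> V).\<close>
definition cp :: "nat set \<Rightarrow> sop \<Rightarrow> bool" where
  "cp V K \<longleftrightarrow> (\<forall>X. finite X \<and> V \<subseteq> X \<longrightarrow> (\<forall>A. psd X A \<longrightarrow> psd X (apply_sop V X K A)))"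

definition trace_nonincr :: "nat set \<Rightarrow> sop \<Rightarrow> bool" where
  "trace_nonincr V K \<longleftrightarrow> (\<forall>\<rho>. psd V \<rho> \<longrightarrow> Re (tr V (apply_sop V V K \<rho>)) \<le> Re (tr V \<rho>))"

definition trace_pres :: "nat set \<Rightarrow> sop \<Rightarrow> bool" where
  "trace_pres V K \<longleftrightarrow> (\<forall>\<rho>. psd V \<rho> \<longrightarrow> tr V (apply_sop V V K \<rho>) = tr V \<rho>)"

definition DProg :: "nat set \<Rightarrow> sop set" where
  "DProg V = {K. is_sop V K \<and> cp V K \<and> trace_nonincr V K}"

definition sop_le :: "nat set \<Rightarrow> sop \<Rightarrow> sop \<Rightarrow> bool" where
  "sop_le V E F \<longleftrightarrow> cp V (\<lambda>a b c d. F a b c d - E a b c d)"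

definition models_tot :: "nat set \<Rightarrow> sop \<Rightarrow> nat set \<Rightarrow> op \<Rightarrow> op \<Rightarrow> bool" where
  "models_tot V E W M N \<longleftrightarrow>
    (\<forall>X \<rho>. finite X \<and> V \<union> W \<subseteq> X \<and> is_pdo X \<rho> \<longrightarrow>
       Re (tr X (opmult X (ext_op W X M) \<rho>))
         \<le> Re (tr X (opmult X (ext_op W X N) (apply_sop V X E \<rho>))))"

definition models_par :: "nat set \<Rightarrow> sop \<Rightarrow> nat set \<Rightarrow> op \<Rightarrow> op \<Rightarrow> bool" where
  "models_par V E W M N \<longleftrightarrow>
    (\<forall>X \<rho>. finite X \<and> V \<union> W \<subseteq> X \<and> is_pdo X \<rho> \<longrightarrow>
       Re (tr X (opmult X (ext_op W X M) \<rho>))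
         \<le> Re (tr X (opmult X (ext_op W X N) (apply_sop V X E \<rho>)))
            + Re (tr X \<rho>) - Re (tr X (apply_sop V X E \<rho>)))"

definition ref_T :: "nat set \<Rightarrow> sop \<Rightarrow> sop \<Rightarrow> bool" where
  "ref_T V E F \<longleftrightarrow> (\<forall>W M N. finite W \<and> is_effect W M \<and> is_effect W N \<longrightarrow>
                        models_tot V E W M N \<longrightarrow> models_tot V F W M N)"

definition ref_P :: "nat set \<Rightarrow> sop \<Rightarrow> sop \<Rightarrow> bool" where
  "ref_P V E F \<longleftrightarrow> (\<forall>W M N. finite W \<and> is_effect W M \<and> is_effect W N \<longrightarrow>
                        models_par V E W M N \<longrightarrow> models_par V F W M N)"

definition equiv_T :: "nat set \<Rightarrow> sop \<Rightarrow> sop \<Rightarrow> bool" where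
  "equiv_T V E F \<longleftrightarrow> ref_T V E F \<and> ref_T V F E"

definition equiv_P :: "nat set \<Rightarrow> sop \<Rightarrow> sop \<Rightarrow> bool" where
  "equiv_P V E F \<longleftrightarrow> ref_P V E F \<and> ref_P V F E"

end

theory Submission
  imports Defs
begin

text \<open>Soundness of both orders rests on \<open>tr (P Q) \<ge> 0\<close> for positive \<open>P, Q\<close> (via a Gram
  decomposition of \<open>Q\<close>), applied to \<open>N \<otimes> I\<close> and \<open>(F - E)(\<rho>)\<close>, resp. to \<open>(I - N) \<otimes> I\<close> and
  \<open>(E - F)(\<rho>)\<close>. For completeness take \<open>N\<close> a scaled pure state \<open>|\<psi>\<rangle>\<langle>\<psi>|\<close> on \<open>H\<^sub>X\<close> and
  \<open>M = E\<^sup>*(N)\<close>: then \<open>E \<Turnstile> (M, N)\<close> holds with equality, refinement transfers it to \<open>F\<close>, and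
  evaluating at \<open>\<rho>\<close> gives \<open>\<langle>\<psi>|E(\<rho>)|\<psi>\<rangle> \<le> \<langle>\<psi>|F(\<rho>)|\<psi>\<rangle>\<close> (reversed for partial correctness,
  using the complementary effects). Equality statements follow since a positive operator with
  nonpositive trace is zero and a super-operator is determined by its values on positive operators.\<close>

section \<open>Positive matrices over a finite index set\<close>

definition quad_form :: "'a set \<Rightarrow> ('a \<Rightarrow> 'a \<Rightarrow> complex) \<Rightarrow> ('a \<Rightarrow> complex) \<Rightarrow> complex" where
  "quad_form S A \<psi> = (\<Sum>s\<in>S. \<Sum>t\<in>S. cnj (\<psi> s) * A s t * \<psi> t)"

definition psd_on :: "'a set \<Rightarrow> ('a \<Rightarrow> 'a \<Rightarrow> complex) \<Rightarrow> bool" where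
  "psd_on S A \<longleftrightarrow> (\<forall>\<psi>. Im (quad_form S A \<psi>) = 0 \<and> Re (quad_form S A \<psi>) \<ge> 0)"

lemma psd_iff_psd_on: "psd X A \<longleftrightarrow> is_op X A \<and> psd_on (asgs X) A"
  by (simp add: psd_def psd_on_def quad_form_def)

lemma quad_form_add:
  "quad_form S A (\<lambda>x. f x + g x) = quad_form S A f + quad_form S A g
     + (\<Sum>s\<in>S. \<Sum>t\<in>S. cnj (f s) * A s t * g t) + (\<Sum>s\<in>S. \<Sum>t\<in>S. cnj (g s) * A s t * f t)"
  unfolding quad_form_def by (simp add: algebra_simps sum.distrib)

lemma quad_form_diff: "quad_form S (\<lambda>s t. A s t - B s t) \<psi> = quad_form S A \<psi> - quad_form S B \<psi>"
  unfolding quad_form_def by (simp add: algebra_simps sum_subtractf)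

lemma quad_form_scale: "quad_form S (\<lambda>s t. c * A s t) \<psi> = c * quad_form S A \<psi>"
  unfolding quad_form_def by (simp add: sum_distrib_left algebra_simps)

lemma mult_if_zero_right: "(x::complex) * (if P then y else 0) = (if P then x * y else 0)" by simp
lemma mult_if_zero_left: "(if P then y else 0) * (x::complex) = (if P then y * x else 0)" by simp
lemma cnj_if_zero: "cnj (if P then x else 0) = (if P then cnj x else 0)" by simp
lemma sum_if_zero_const: "(\<Sum>t\<in>T. if P then f t else (0::complex)) = (if P then sum f T else 0)" by simp
lemmas delta_simps = mult_if_zero_right mult_if_zero_left cnj_if_zero sum.delta sum.delta' sum_if_zero_const

lemma quad_form_single:
  assumes "finite S" "a \<in> S"
  shows "quad_form S A (\<lambda>x. if x = a then \<alpha> else 0) = cnj \<alpha> * A a a * \<alpha>"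
  using assms unfolding quad_form_def by (simp add: delta_simps del: complex_cnj_zero_iff)

lemma quad_form_two:
  assumes "finite S" "a \<in> S" "b \<in> S" "a \<noteq> b"
  shows "quad_form S A (\<lambda>x. if x = a then \<alpha> else if x = b then \<beta> else 0) =
     cnj \<alpha> * A a a * \<alpha> + cnj \<beta> * A b b * \<beta> + cnj \<alpha> * A a b * \<beta> + cnj \<beta> * A b a * \<alpha>"
proof -
  have "(\<lambda>x. if x = a then \<alpha> else if x = b then \<beta> else 0)
      = (\<lambda>x. (if x = a then \<alpha> else 0) + (if x = b then \<beta> else 0))"
    using assms(4) by auto
  then show ?thesis
    using assms by (simp add: quad_form_add quad_form_single delta_simps del: complex_cnj_zero_iff)
qed

lemma psd_on_diag:
  assumes "psd_on S A" "finite S" "a \<in> S"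
  shows "Im (A a a) = 0" "Re (A a a) \<ge> 0"
  using assms(1) quad_form_single[OF assms(2,3), of A 1] unfolding psd_on_def by (metis mult_1 mult_1_right complex_cnj_one)+

lemma psd_on_hermitian:
  assumes "psd_on S A" "finite S" "a \<in> S" "b \<in> S"
  shows "A a b = cnj (A b a)"
proof (cases "a = b")
  case True
  then show ?thesis using psd_on_diag(1)[OF assms(1-3)] by (simp add: complex_eq_iff)
next
  case False
  have diag: "Im (A a a) = 0" "Im (A b b) = 0"
    using psd_on_diag(1)[OF assms(1,2)] assms(3,4) by auto
  have "Im (quad_form S A (\<lambda>x. if x = a then 1 else if x = b then 1 else 0)) = 0"
    using assms(1) unfolding psd_on_def by blast
  then have im: "Im (A a b) + Im (A b a) = 0"
    using quad_form_two[OF assms(2-4) False, of A 1 1] diag by simp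
  have "Im (quad_form S A (\<lambda>x. if x = a then 1 else if x = b then \<i> else 0)) = 0"
    using assms(1) unfolding psd_on_def by blast
  then have re: "Re (A a b) - Re (A b a) = 0"
    using quad_form_two[OF assms(2-4) False, of A 1 \<i>] diag by (simp add: algebra_simps)
  show ?thesis using im re by (simp add: complex_eq_iff)
qed

text \<open>Otherwise the form is negative on a suitable combination of the basis vectors at \<open>a\<close> and \<open>b\<close>.\<close>
lemma psd_on_zero_row:
  assumes "psd_on S A" "finite S" "a \<in> S" "b \<in> S" "A a a = 0"
  shows "A a b = 0"
proof (rule ccontr)
  define z where "z = A a b"
  assume "A a b \<noteq> 0"
  then have "z \<noteq> 0" "a \<noteq> b" using assms(5) z_def by auto
  have ba: "A b a = cnj z" using psd_on_hermitian[OF assms(1,2,4,3)] z_def by simp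
  define r :: real where "r = (Re (A b b) + 1) / (2 * (cmod z)^2)"
  have "0 \<le> Re (quad_form S A (\<lambda>x. if x = a then - (of_real r * z) else if x = b then 1 else 0))"
    using assms(1) unfolding psd_on_def by blast
  also have "quad_form S A (\<lambda>x. if x = a then - (of_real r * z) else if x = b then 1 else 0)
      = A b b - 2 * of_real r * (cnj z * z)"
    using quad_form_two[OF assms(2-4) \<open>a \<noteq> b\<close>, of A "- (of_real r * z)" 1] assms(5) ba z_def
    by (simp add: algebra_simps)
  also have "cnj z * z = of_real ((cmod z)^2)"
    by (subst complex_norm_square) (simp add: mult.commute)
  finally have "0 \<le> Re (A b b) - 2 * r * (cmod z)^2" by simp
  moreover have "2 * r * (cmod z)^2 = Re (A b b) + 1"
    unfolding r_def using \<open>z \<noteq> 0\<close> by (simp add: field_simps)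
  ultimately show False by simp
qed

lemma psd_on_zero_col:
  assumes "psd_on S A" "finite S" "a \<in> S" "b \<in> S" "A a a = 0"
  shows "A b a = 0"
  using psd_on_hermitian[OF assms(1,2,4,3)] psd_on_zero_row[OF assms] by simp

lemma psd_on_eq_zero_if_diag_zero:
  assumes "psd_on S A" "finite S" "\<And>s. s \<in> S \<Longrightarrow> A s s = 0" "s \<in> S" "t \<in> S"
  shows "A s t = 0"
  using psd_on_zero_row[OF assms(1,2,4,5) assms(3)[OF assms(4)]] .

lemma psd_on_subset:
  assumes "psd_on S A" "finite S" "T \<subseteq> S"
  shows "psd_on T A"
  unfolding psd_on_def
proof
  fix \<psi>
  have "quad_form S A (\<lambda>x. if x \<in> T then \<psi> x else 0)
      = (\<Sum>s\<in>S. if s \<in> T then (\<Sum>t\<in>S. if t \<in> T then cnj (\<psi> s) * A s t * \<psi> t else 0) else 0)"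
    unfolding quad_form_def by (auto intro!: sum.cong)
  also have "\<dots> = (\<Sum>s\<in>S \<inter> T. \<Sum>t\<in>S \<inter> T. cnj (\<psi> s) * A s t * \<psi> t)"
    using assms(2) by (simp add: sum.inter_restrict)
  also have "\<dots> = quad_form T A \<psi>"
    using assms(3) unfolding quad_form_def by (simp add: Int_absorb1)
  finally have "quad_form T A \<psi> = quad_form S A (\<lambda>x. if x \<in> T then \<psi> x else 0)" ..
  then show "Im (quad_form T A \<psi>) = 0 \<and> Re (quad_form T A \<psi>) \<ge> 0"
    using assms(1) unfolding psd_on_def by simp
qed

text \<open>The form of the Schur complement at \<psi> is the form of \<open>A\<close> at \<psi> shifted in coordinate \<open>a\<close>.\<close>
lemma psd_on_schur_complement:
  assumes "psd_on S A" "finite S" "a \<in> S" "A a a \<noteq> 0"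
  shows "psd_on S (\<lambda>s t. A s t - A s a * A a t / A a a)"
  unfolding psd_on_def
proof
  fix \<psi>
  define q where "q = A a a"
  define u where "u = (\<Sum>t\<in>S. A a t * \<psi> t)"
  define c where "c = - u / q"
  have q_real: "cnj q = q"
    using psd_on_diag(1)[OF assms(1-3)] unfolding q_def by (simp add: complex_eq_iff)
  have col_a: "(\<Sum>s\<in>S. cnj (\<psi> s) * A s a) = cnj u"
  proof -
    have "(\<Sum>s\<in>S. cnj (\<psi> s) * A s a) = (\<Sum>s\<in>S. cnj (A a s * \<psi> s))"
      using psd_on_hermitian[OF assms(1,2) _ assms(3)] by (intro sum.cong) (auto simp: mult.commute)
    then show ?thesis unfolding u_def by simp
  qed
  have "quad_form S (\<lambda>s t. A s t - A s a * A a t / A a a) \<psi>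
      = quad_form S A \<psi> - (\<Sum>s\<in>S. cnj (\<psi> s) * A s a) * u / q"
  proof -
    have "(\<Sum>s\<in>S. cnj (\<psi> s) * A s a) * u / q
        = (\<Sum>s\<in>S. \<Sum>t\<in>S. cnj (\<psi> s) * A s a * (A a t * \<psi> t) / q)"
      unfolding u_def sum_product sum_divide_distrib by simp
    then show ?thesis
      unfolding quad_form_def q_def by (simp add: algebra_simps sum_subtractf sum_divide_distrib)
  qed
  also have "\<dots> = quad_form S A \<psi> + cnj c * q * c
      + (\<Sum>s\<in>S. cnj (\<psi> s) * A s a) * c + cnj c * u"
    unfolding col_a c_def using assms(4) q_real by (simp add: q_def field_simps)
  also have "\<dots> = quad_form S A (\<lambda>x. \<psi> x + (if x = a then c else 0))"
    using assms(2,3) unfolding quad_form_add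
    by (simp add: quad_form_single delta_simps u_def q_def sum_distrib_left sum_distrib_right
        mult.assoc del: complex_cnj_zero_iff)
  finally show "Im (quad_form S (\<lambda>s t. A s t - A s a * A a t / A a a) \<psi>) = 0
      \<and> Re (quad_form S (\<lambda>s t. A s t - A s a * A a t / A a a) \<psi>) \<ge> 0"
    using assms(1) unfolding psd_on_def by simp
qed

text \<open>Induction on the index set: a new index \<open>a\<close> either has a zero row, or \<open>A\<close> is a rank-one
  term through column \<open>a\<close> plus the Schur complement, which vanishes on row and column \<open>a\<close>.\<close>
lemma psd_on_gram_decomposition:
  assumes "finite S" "psd_on S A"
  shows "\<exists>vs. \<forall>s\<in>S. \<forall>t\<in>S. A s t = (\<Sum>v\<leftarrow>vs. v s * cnj (v t))"
  using assms
proof (induction S arbitrary: A rule: finite_induct)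
  case empty
  then show ?case by simp
next
  case (insert a S)
  let ?S = "insert a S"
  have fin: "finite ?S" using insert.hyps by simp
  obtain A' us where A': "psd_on ?S A'"
    and A'_zero: "\<And>t. t \<in> ?S \<Longrightarrow> A' a t = 0" "\<And>t. t \<in> ?S \<Longrightarrow> A' t a = 0"
    and A_split: "\<And>s t. s \<in> ?S \<Longrightarrow> t \<in> ?S \<Longrightarrow> A s t = A' s t + (\<Sum>u\<leftarrow>us. u s * cnj (u t))"
  proof (cases "A a a = 0")
    case True
    then show ?thesis
      using psd_on_zero_row[OF insert.prems fin _ _ True] psd_on_zero_col[OF insert.prems fin _ _ True]
      by (intro that[of A "[]"]) (auto simp: insert.prems)
  next
    case False
    define q where "q = A a a"
    have q_pos: "Im q = 0" "Re q > 0"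
      using psd_on_diag[OF insert.prems fin, of a] False unfolding q_def
      by (auto simp: complex_eq_iff order_less_le)
    obtain r where r: "r * r = q" "cnj r = r"
      using q_pos by (intro that[of "of_real (sqrt (Re q))"]) (auto simp: complex_eq_iff)
    define u where "u = (\<lambda>s. A s a / r)"
    have "A s a * A a t / q = u s * cnj (u t)" if "t \<in> ?S" for s t
    proof -
      have "cnj (A t a) = A a t" using psd_on_hermitian[OF insert.prems fin _ that] by simp
      then show ?thesis unfolding u_def by (simp add: r flip: r(1))
    qed
    then show ?thesis
      using psd_on_schur_complement[OF insert.prems fin _ False] False
      by (intro that[of "\<lambda>s t. A s t - A s a * A a t / A a a" "[u]"]) (auto simp: q_def)
  qed
  obtain vs where vs: "\<forall>s\<in>S. \<forall>t\<in>S. A' s t = (\<Sum>v\<leftarrow>vs. v s * cnj (v t))"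
    using insert.IH[OF psd_on_subset[OF A' fin]] by blast
  define ws where "ws = map (\<lambda>v x. if x = a then 0 else v x) vs"
  have "A' s t = (\<Sum>w\<leftarrow>ws. w s * cnj (w t))" if "s \<in> ?S" "t \<in> ?S" for s t
  proof (cases "s = a \<or> t = a")
    case True
    then show ?thesis using that A'_zero unfolding ws_def by (auto simp: o_def)
  next
    case False
    then show ?thesis using that vs unfolding ws_def by (simp add: o_def)
  qed
  then show ?case
    using A_split by (intro exI[of _ "ws @ us"]) simp
qed

lemma psd_on_trace_mult:
  assumes "finite S" "psd_on S P" "psd_on S Q"
  shows "Im (\<Sum>s\<in>S. \<Sum>t\<in>S. P s t * Q t s) = 0" "Re (\<Sum>s\<in>S. \<Sum>t\<in>S. P s t * Q t s) \<ge> 0"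
proof -
  obtain vs where vs: "\<forall>s\<in>S. \<forall>t\<in>S. Q s t = (\<Sum>v\<leftarrow>vs. v s * cnj (v t))"
    using psd_on_gram_decomposition[OF assms(1,3)] by blast
  have "(\<Sum>s\<in>S. \<Sum>t\<in>S. P s t * Q t s)
      = (\<Sum>s\<in>S. \<Sum>t\<in>S. \<Sum>i<length vs. cnj ((vs ! i) s) * P s t * (vs ! i) t)"
    using vs by (simp add: sum_list_sum_nth atLeast0LessThan sum_distrib_left mult_ac)
  also have "\<dots> = (\<Sum>v\<leftarrow>vs. quad_form S P v)"
    unfolding quad_form_def sum_list_sum_nth atLeast0LessThan
    by (subst sum.swap) (simp add: sum.swap[of _ _ "{..<length vs}"])
  finally have trace_eq: "(\<Sum>s\<in>S. \<Sum>t\<in>S. P s t * Q t s) = (\<Sum>v\<leftarrow>vs. quad_form S P v)" .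
  have "Im (\<Sum>v\<leftarrow>vs. quad_form S P v) = 0 \<and> Re (\<Sum>v\<leftarrow>vs. quad_form S P v) \<ge> 0"
    using assms(2) unfolding psd_on_def by (induction vs) auto
  then show "Im (\<Sum>s\<in>S. \<Sum>t\<in>S. P s t * Q t s) = 0" "Re (\<Sum>s\<in>S. \<Sum>t\<in>S. P s t * Q t s) \<ge> 0"
    unfolding trace_eq by auto
qed

lemma quad_form_norm_le:
  assumes "finite S"
  shows "cmod (quad_form S A \<phi>) \<le> (\<Sum>s\<in>S. \<Sum>t\<in>S. cmod (A s t)) * (\<Sum>u\<in>S. (cmod (\<phi> u))\<^sup>2)"
proof -
  define T where "T = (\<Sum>u\<in>S. (cmod (\<phi> u))\<^sup>2)"
  have norm_prod_le: "cmod (\<phi> s) * cmod (\<phi> t) \<le> T" if "s \<in> S" "t \<in> S" for s t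
  proof -
    have "cmod (\<phi> s) * cmod (\<phi> t) \<le> (max (cmod (\<phi> s)) (cmod (\<phi> t)))\<^sup>2"
      unfolding power2_eq_square by (intro mult_mono) (auto simp: le_max_iff_disj)
    also have "\<dots> \<le> T"
      unfolding T_def using that assms by (auto simp: max_def intro: member_le_sum)
    finally show ?thesis .
  qed
  have "cmod (cnj (\<phi> s) * A s t * \<phi> t) \<le> cmod (A s t) * T" if "s \<in> S" "t \<in> S" for s t
  proof -
    have "cmod (cnj (\<phi> s) * A s t * \<phi> t) = cmod (A s t) * (cmod (\<phi> s) * cmod (\<phi> t))"
      by (simp add: norm_mult)
    also have "\<dots> \<le> cmod (A s t) * T"
      using norm_prod_le[OF that] by (simp add: mult_left_mono)
    finally show ?thesis .
  qed
  then have "cmod (quad_form S A \<phi>) \<le> (\<Sum>s\<in>S. \<Sum>t\<in>S. cmod (A s t) * T)"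
    unfolding quad_form_def by (intro order.trans[OF norm_sum sum_mono] order.trans[OF norm_sum sum_mono])
  then show ?thesis unfolding T_def by (simp add: sum_distrib_right)
qed

lemma finite_asgs: "finite X \<Longrightarrow> finite (asgs X)"
proof -
  assume "finite X"
  have "asgs X \<subseteq> (\<lambda>S q. q \<in> S) ` Pow X"
  proof
    fix s assume s: "s \<in> asgs X"
    have "s = (\<lambda>q. q \<in> {q. s q})" by auto
    moreover have "{q. s q} \<subseteq> X" using s unfolding asgs_def by auto
    ultimately show "s \<in> (\<lambda>S q. q \<in> S) ` Pow X" by blast
  qed
  then show ?thesis using \<open>finite X\<close> by (meson finite_Pow_iff finite_imageI finite_subset)
qed

lemma restr_in_asgs: "restr W s \<in> asgs W"
  unfolding asgs_def restr_def by auto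

lemma restr_asgs: "s \<in> asgs X \<Longrightarrow> restr X s = s"
  unfolding asgs_def restr_def by auto

lemma restr_restr: "V \<subseteq> X \<Longrightarrow> restr V (restr X s) = restr V s"
  unfolding restr_def by auto

lemma asgs_mono: "V \<subseteq> X \<Longrightarrow> asgs V \<subseteq> asgs X"
  unfolding asgs_def by auto

lemma override_on_in_asgs: "W \<subseteq> X \<Longrightarrow> c \<in> asgs X \<Longrightarrow> \<sigma> \<in> asgs W \<Longrightarrow> override_on c \<sigma> W \<in> asgs X"
  unfolding override_on_def asgs_def by auto

lemma restr_override_on: "\<sigma> \<in> asgs W \<Longrightarrow> restr W (override_on c \<sigma> W) = \<sigma>"
  unfolding restr_def override_on_def asgs_def by auto

lemma restr_override_on_subset: "V \<subseteq> X \<Longrightarrow> restr V (override_on a \<sigma> X) = restr V \<sigma>"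
  unfolding restr_def override_on_def by auto

lemma override_on_override_on: "override_on (override_on c \<tau> W) \<sigma> W = override_on c \<sigma> W"
  unfolding override_on_def by auto

lemma agree_override_on:
  assumes "V \<subseteq> X" "X \<subseteq> Y" "\<sigma> \<in> asgs X"
  shows "agree (Y - V) (override_on a \<sigma> X) a \<longleftrightarrow> agree (X - V) \<sigma> (restr X a)"
  using assms unfolding agree_def override_on_def restr_def by auto

lemma agree_override_on_override_on:
  "agree (Y - X) (override_on a \<sigma> X) (override_on b \<tau> X) \<longleftrightarrow> agree (Y - X) a b"
  unfolding agree_def override_on_def by auto

text \<open>The assignments on \<open>Y\<close> agreeing with \<open>a\<close> outside \<open>X\<close> are the overrides of \<open>a\<close> on \<open>X\<close>.\<close>
lemma sum_asgs_agree:
  assumes "X \<subseteq> Y" "finite Y" "a \<in> asgs Y"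
  shows "(\<Sum>s\<in>asgs Y. if agree (Y - X) s a then f s else 0) = (\<Sum>\<sigma>\<in>asgs X. f (override_on a \<sigma> X))"
proof -
  have "(\<Sum>s\<in>asgs Y. if agree (Y - X) s a then f s else 0) = sum f {s\<in>asgs Y. agree (Y - X) s a}"
    using finite_asgs[OF assms(2)] by (simp add: sum.inter_filter)
  also have "\<dots> = (\<Sum>\<sigma>\<in>asgs X. f (override_on a \<sigma> X))"
  proof (rule sum.reindex_bij_witness[of _ "\<lambda>\<sigma>. override_on a \<sigma> X" "restr X"])
    fix \<sigma> assume "\<sigma> \<in> asgs X"
    then show "restr X (override_on a \<sigma> X) = \<sigma>"
      and "override_on a \<sigma> X \<in> {s \<in> asgs Y. agree (Y - X) s a}"
      using assms unfolding restr_def override_on_def asgs_def agree_def by auto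
  next
    fix s assume "s \<in> {s \<in> asgs Y. agree (Y - X) s a}"
    then show "override_on a (restr X s) X = s"
      using assms unfolding override_on_def asgs_def agree_def restr_def by (auto simp: fun_eq_iff)
    then show "f (override_on a (restr X s) X) = f s" by simp
  qed (rule restr_in_asgs)
  finally show ?thesis .
qed

lemma sum_asgs_split:
  assumes "W \<subseteq> X" "finite X"
  shows "(\<Sum>s\<in>asgs X. f s) = (\<Sum>c\<in>asgs (X - W). \<Sum>\<sigma>\<in>asgs W. f (override_on c \<sigma> W))"
proof -
  have fin: "finite (asgs X)" "finite (asgs (X - W))" using finite_asgs assms by auto
  have "(\<Sum>s\<in>asgs X. f s) = (\<Sum>c\<in>asgs (X - W). sum f {s \<in> asgs X. restr (X - W) s = c})"
    by (rule sum.group[symmetric, OF fin]) (auto intro: restr_in_asgs)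
  also have "\<dots> = (\<Sum>c\<in>asgs (X - W). \<Sum>\<sigma>\<in>asgs W. f (override_on c \<sigma> W))"
  proof (rule sum.cong[OF refl])
    fix c assume c: "c \<in> asgs (X - W)"
    then have "{s \<in> asgs X. restr (X - W) s = c} = {s \<in> asgs X. agree (X - W) s c}"
      unfolding restr_def agree_def asgs_def by (auto simp: fun_eq_iff)
    then have "sum f {s \<in> asgs X. restr (X - W) s = c} = (\<Sum>s\<in>asgs X. if agree (X - W) s c then f s else 0)"
      using fin by (simp add: sum.inter_filter)
    also have "\<dots> = (\<Sum>\<sigma>\<in>asgs W. f (override_on c \<sigma> W))"
      using c asgs_mono[of "X - W" X] by (intro sum_asgs_agree[OF assms]) auto
    finally show "sum f {s \<in> asgs X. restr (X - W) s = c} = (\<Sum>\<sigma>\<in>asgs W. f (override_on c \<sigma> W))" .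
  qed
  finally show ?thesis .
qed

section \<open>Operators, effects and partial density operators\<close>

lemma tr_opmult: "tr X (opmult X A B) = (\<Sum>s\<in>asgs X. \<Sum>u\<in>asgs X. A s u * B u s)"
  unfolding tr_def opmult_def by simp

lemma tr_diff: "tr X (\<lambda>s t. A s t - B s t) = tr X A - tr X B"
  unfolding tr_def by (simp add: sum_subtractf)

lemma tr_scale: "tr X (\<lambda>s t. c * A s t) = c * tr X A"
  unfolding tr_def by (simp add: sum_distrib_left)

lemma tr_opmult_diff_right:
  "tr X (opmult X P (\<lambda>s t. A s t - B s t)) = tr X (opmult X P A) - tr X (opmult X P B)"
  unfolding tr_opmult by (simp add: algebra_simps sum_subtractf)

lemma tr_opmult_scale_left: "tr X (opmult X (\<lambda>s t. c * A s t) B) = c * tr X (opmult X A B)"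
  unfolding tr_opmult by (simp add: sum_distrib_left mult.assoc)

lemma tr_opmult_idop_minus:
  assumes "finite X"
  shows "tr X (opmult X (\<lambda>s t. idop X s t - P s t) B) = tr X B - tr X (opmult X P B)"
proof -
  have "(\<Sum>s\<in>asgs X. \<Sum>u\<in>asgs X. idop X s u * B u s) = tr X B"
    unfolding tr_def idop_def using finite_asgs[OF assms]
    by (auto intro!: sum.cong simp: delta_simps if_distrib[where f="\<lambda>x. x * _"] cong: if_cong)
  then show ?thesis
    unfolding tr_opmult by (simp add: algebra_simps sum_subtractf)
qed

lemma psd_scale: "psd X A \<Longrightarrow> 0 \<le> d \<Longrightarrow> psd X (\<lambda>s t. of_real d * A s t)"
  unfolding psd_iff_psd_on psd_on_def is_op_def quad_form_scale by auto

lemma psd_zero: "psd X (\<lambda>s t. 0)"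
  unfolding psd_iff_psd_on psd_on_def is_op_def quad_form_def by simp

lemma tr_psd:
  assumes "psd X A" "finite X"
  shows "Im (tr X A) = 0" "Re (tr X A) \<ge> 0"
  using psd_on_diag[of "asgs X" A] assms finite_asgs unfolding psd_iff_psd_on tr_def
  by (auto simp: Im_sum Re_sum intro: sum_nonneg)

lemma psd_tr_opmult:
  assumes "finite X" "psd X P" "psd X Q"
  shows "Im (tr X (opmult X P Q)) = 0" "Re (tr X (opmult X P Q)) \<ge> 0"
  using psd_on_trace_mult[of "asgs X" P Q] assms finite_asgs
  unfolding tr_opmult psd_iff_psd_on by auto

definition ketbra :: "nat set \<Rightarrow> (asg \<Rightarrow> complex) \<Rightarrow> op" where
  "ketbra X \<psi> = (\<lambda>u v. if u \<in> asgs X \<and> v \<in> asgs X then \<psi> u * cnj (\<psi> v) else 0)"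

lemma tr_opmult_ketbra_left: "tr X (opmult X (ketbra X \<psi>) B) = quad_form (asgs X) B \<psi>"
proof -
  have "tr X (opmult X (ketbra X \<psi>) B) = (\<Sum>s\<in>asgs X. \<Sum>u\<in>asgs X. cnj (\<psi> u) * B u s * \<psi> s)"
    unfolding tr_opmult ketbra_def by (auto intro!: sum.cong)
  also have "\<dots> = quad_form (asgs X) B \<psi>" unfolding quad_form_def by (rule sum.swap)
  finally show ?thesis .
qed

lemma tr_opmult_ketbra_right: "tr X (opmult X B (ketbra X \<psi>)) = quad_form (asgs X) B \<psi>"
  unfolding tr_opmult ketbra_def quad_form_def by (auto intro!: sum.cong)

lemma psd_ketbra: "psd X (ketbra X \<psi>)"
  unfolding psd_iff_psd_on
proof
  show "is_op X (ketbra X \<psi>)" unfolding is_op_def ketbra_def by auto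
  show "psd_on (asgs X) (ketbra X \<psi>)" unfolding psd_on_def
  proof
    fix \<phi>
    define z where "z = (\<Sum>s\<in>asgs X. cnj (\<phi> s) * \<psi> s)"
    have cnj_z: "cnj z = (\<Sum>t\<in>asgs X. cnj (\<psi> t) * \<phi> t)" unfolding z_def by (simp add: mult.commute)
    have "quad_form (asgs X) (ketbra X \<psi>) \<phi> = z * cnj z"
      unfolding cnj_z unfolding quad_form_def ketbra_def z_def sum_product
      by (auto intro!: sum.cong simp: mult.assoc)
    also have "\<dots> = of_real ((cmod z)\<^sup>2)" using complex_norm_square[of z] by simp
    finally show "Im (quad_form (asgs X) (ketbra X \<psi>) \<phi>) = 0 \<and> Re (quad_form (asgs X) (ketbra X \<psi>) \<phi>) \<ge> 0"
      by simp
  qed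
qed

lemma ext_op_self: "is_op X M \<Longrightarrow> ext_op X X M = M"
  unfolding ext_op_def is_op_def by (auto simp: fun_eq_iff restr_asgs agree_def)

lemma ext_op_idop_minus:
  assumes "W \<subseteq> X"
  shows "ext_op W X (\<lambda>s t. idop W s t - N s t) = (\<lambda>s t. idop X s t - ext_op W X N s t)"
proof (intro ext)
  fix s t
  show "ext_op W X (\<lambda>s t. idop W s t - N s t) s t = idop X s t - ext_op W X N s t"
  proof (cases "s \<in> asgs X \<and> t \<in> asgs X \<and> agree (X - W) s t")
    case True
    have "restr W s = restr W t \<longleftrightarrow> s = t"
    proof
      assume eq: "restr W s = restr W t"
      show "s = t"
      proof
        fix q
        show "s q = t q"
          using fun_cong[OF eq, of q] True unfolding restr_def agree_def asgs_def
          by (cases "q \<in> W"; cases "q \<in> X") auto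
      qed
    qed simp
    then show ?thesis using True restr_in_asgs[of W s] unfolding ext_op_def idop_def by auto
  next
    case False
    then show ?thesis unfolding ext_op_def idop_def agree_def by auto
  qed
qed

text \<open>The form of \<open>N \<otimes> I\<close> at \<psi> is the sum of the forms of \<open>N\<close> at the slices of \<psi>.\<close>
lemma psd_ext_op:
  assumes "psd W N" "W \<subseteq> X" "finite X"
  shows "psd X (ext_op W X N)"
  unfolding psd_iff_psd_on
proof
  show "is_op X (ext_op W X N)" unfolding is_op_def ext_op_def by auto
  show "psd_on (asgs X) (ext_op W X N)"
    unfolding psd_on_def
  proof
    fix \<psi>
    have "quad_form (asgs X) (ext_op W X N) \<psi> = (\<Sum>s\<in>asgs X. cnj (\<psi> s) *
        (\<Sum>t\<in>asgs X. if agree (X - W) t s then N (restr W s) (restr W t) * \<psi> t else 0))"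
      unfolding quad_form_def ext_op_def
      by (auto intro!: sum.cong simp: sum_distrib_left agree_def)
    also have "\<dots> = (\<Sum>s\<in>asgs X. cnj (\<psi> s) *
        (\<Sum>\<sigma>\<in>asgs W. N (restr W s) \<sigma> * \<psi> (override_on s \<sigma> W)))"
      by (intro sum.cong refl, subst sum_asgs_agree[OF assms(2,3)]) (auto simp: restr_override_on)
    also have "\<dots> = (\<Sum>c\<in>asgs (X - W). \<Sum>\<tau>\<in>asgs W. cnj (\<psi> (override_on c \<tau> W)) *
        (\<Sum>\<sigma>\<in>asgs W. N \<tau> \<sigma> * \<psi> (override_on c \<sigma> W)))"
      by (subst sum_asgs_split[OF assms(2,3)]) (simp add: override_on_override_on restr_override_on)
    also have "\<dots> = (\<Sum>c\<in>asgs (X - W). quad_form (asgs W) N (\<lambda>\<sigma>. \<psi> (override_on c \<sigma> W)))"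
      unfolding quad_form_def by (simp add: sum_distrib_left mult.assoc)
    finally show "Im (quad_form (asgs X) (ext_op W X N) \<psi>) = 0 \<and> Re (quad_form (asgs X) (ext_op W X N) \<psi>) \<ge> 0"
      using assms(1) unfolding psd_iff_psd_on psd_on_def by (simp add: Im_sum Re_sum sum_nonneg)
  qed
qed

lemma quad_form_idop:
  assumes "finite X"
  shows "quad_form (asgs X) (idop X) \<phi> = of_real (\<Sum>u\<in>asgs X. (cmod (\<phi> u))\<^sup>2)"
proof -
  have "quad_form (asgs X) (idop X) \<phi> = (\<Sum>s\<in>asgs X. cnj (\<phi> s) * \<phi> s)"
    unfolding quad_form_def idop_def using finite_asgs[OF assms]
    by (auto intro!: sum.cong simp: delta_simps if_distrib[where f="\<lambda>x. x * _"] cong: if_cong)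
  also have "\<dots> = of_real (\<Sum>u\<in>asgs X. (cmod (\<phi> u))\<^sup>2)"
    unfolding of_real_sum by (intro sum.cong refl) (metis complex_norm_square mult.commute)
  finally show ?thesis .
qed

lemma is_effect_scaleI:
  assumes "psd X M" "finite X" "0 \<le> c" "c * (\<Sum>s\<in>asgs X. \<Sum>t\<in>asgs X. cmod (M s t)) \<le> 1"
  shows "is_effect X (\<lambda>s t. of_real c * M s t)"
  unfolding is_effect_def
proof
  show "psd X (\<lambda>s t. of_real c * M s t)" using psd_scale[OF assms(1,3)] .
  show "psd X (\<lambda>s t. idop X s t - of_real c * M s t)"
    unfolding psd_iff_psd_on
  proof
    show "is_op X (\<lambda>s t. idop X s t - of_real c * M s t)"
      using assms(1) unfolding psd_iff_psd_on is_op_def idop_def by auto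
    show "psd_on (asgs X) (\<lambda>s t. idop X s t - of_real c * M s t)"
      unfolding psd_on_def quad_form_diff quad_form_scale quad_form_idop[OF assms(2)]
    proof
      fix \<phi>
      define T where "T = (\<Sum>u\<in>asgs X. (cmod (\<phi> u))\<^sup>2)"
      define SM where "SM = (\<Sum>s\<in>asgs X. \<Sum>t\<in>asgs X. cmod (M s t))"
      have "Re (quad_form (asgs X) M \<phi>) \<le> SM * T"
        unfolding T_def SM_def
        using complex_Re_le_cmod quad_form_norm_le[OF finite_asgs[OF assms(2)]] by (rule order.trans)
      then have "c * Re (quad_form (asgs X) M \<phi>) \<le> (c * SM) * T"
        using assms(3) by (simp add: mult_left_mono mult.assoc)
      also have "\<dots> \<le> T"
        using assms(3,4) unfolding SM_def T_def by (intro mult_left_le_one_le) (auto intro!: sum_nonneg mult_nonneg_nonneg)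
      finally have "c * Re (quad_form (asgs X) M \<phi>) \<le> T" .
      moreover have "Im (quad_form (asgs X) M \<phi>) = 0"
        using assms(1) unfolding psd_iff_psd_on psd_on_def by blast
      ultimately show "Im (of_real T - of_real c * quad_form (asgs X) M \<phi>) = 0
          \<and> Re (of_real T - of_real c * quad_form (asgs X) M \<phi>) \<ge> 0"
        by simp
    qed
  qed
qed

lemma psd_scale_effects:
  assumes "psd X A" "psd X B" "finite X"
  obtains c where "c > 0" "is_effect X (\<lambda>s t. of_real c * A s t)" "is_effect X (\<lambda>s t. of_real c * B s t)"
proof -
  define SA where "SA = (\<Sum>s\<in>asgs X. \<Sum>t\<in>asgs X. cmod (A s t))"
  define SB where "SB = (\<Sum>s\<in>asgs X. \<Sum>t\<in>asgs X. cmod (B s t))"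
  define c where "c = 1 / (1 + SA + SB)"
  have "SA \<ge> 0" "SB \<ge> 0" unfolding SA_def SB_def by (auto intro!: sum_nonneg)
  then have "c > 0" "c * SA \<le> 1" "c * SB \<le> 1"
    unfolding c_def by (simp_all add: field_simps)
  then show ?thesis
    using is_effect_scaleI[OF assms(1,3), of c] is_effect_scaleI[OF assms(2,3), of c]
    unfolding SA_def SB_def by (intro that) auto
qed

lemma is_effect_compl: "is_effect X M \<Longrightarrow> is_effect X (\<lambda>s t. idop X s t - M s t)"
  unfolding is_effect_def by simp

lemma psd_scale_pdo:
  assumes "psd X A" "finite X"
  obtains d where "d > 0" "is_pdo X (\<lambda>s t. of_real d * A s t)"
proof
  define d where "d = 1 / (1 + Re (tr X A))"
  have tr_nonneg: "Re (tr X A) \<ge> 0" using tr_psd[OF assms] by blast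
  then show "d > 0" unfolding d_def by simp
  have "Re (tr X (\<lambda>s t. of_real d * A s t)) = Re (tr X A) / (1 + Re (tr X A))"
    unfolding tr_scale d_def by simp
  also have "\<dots> \<le> 1" using tr_nonneg by simp
  finally show "is_pdo X (\<lambda>s t. of_real d * A s t)"
    unfolding is_pdo_def using psd_scale[OF assms(1)] \<open>d > 0\<close> by simp
qed

section \<open>Super-operators and their duals\<close>

lemma apply_sop_diff:
  "apply_sop V X (\<lambda>a b c d. F a b c d - E a b c d) A = (\<lambda>s t. apply_sop V X F A s t - apply_sop V X E A s t)"
proof -
  have "\<And>c x y (z::complex). (if c then (x - y) * z else 0) = (if c then x * z else 0) - (if c then y * z else 0)"
    by (simp add: algebra_simps)
  then show ?thesis unfolding apply_sop_def by (simp only: sum_subtractf fun_eq_iff) auto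
qed

lemma apply_sop_scale: "apply_sop V X K (\<lambda>s t. c * A s t) = (\<lambda>s t. c * apply_sop V X K A s t)"
  unfolding apply_sop_def by (auto simp: fun_eq_iff sum_distrib_left algebra_simps intro!: sum.cong)

lemma apply_sop_is_op: "is_op X (apply_sop V X K A)"
  unfolding is_op_def apply_sop_def by auto

lemma apply_sop_zero: "apply_sop V X (\<lambda>a b c d. 0) A = (\<lambda>s t. 0)"
  unfolding apply_sop_def by (intro ext) (simp only: mult_zero_left if_cancel sum.neutral_const)

lemma apply_sop_self:
  assumes "s \<in> asgs V" "t \<in> asgs V"
  shows "apply_sop V V K A s t = (\<Sum>s'\<in>asgs V. \<Sum>t'\<in>asgs V. K s t s' t' * A s' t')"
  unfolding apply_sop_def agree_def using assms by (auto intro!: sum.cong simp: restr_asgs)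

lemma cp_psd: "cp V K \<Longrightarrow> finite X \<Longrightarrow> V \<subseteq> X \<Longrightarrow> psd X A \<Longrightarrow> psd X (apply_sop V X K A)"
  unfolding cp_def by blast

lemma DProgD: "E \<in> DProg V \<Longrightarrow> is_sop V E" "E \<in> DProg V \<Longrightarrow> cp V E"
  unfolding DProg_def by auto

text \<open>For fixed \<open>a b\<close>, the slice \<open>(F - E) a b\<close> of the kernels is a matrix whose quadratic form
  is an entry of \<open>(F - E)\<close> applied to a pure state, hence zero.\<close>
lemma sop_eqI:
  assumes "finite V" "is_sop V E" "is_sop V F"
    and "\<And>A s t. psd V A \<Longrightarrow> s \<in> asgs V \<Longrightarrow> t \<in> asgs V \<Longrightarrow> apply_sop V V E A s t = apply_sop V V F A s t"
  shows "E = F"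
proof (intro ext)
  fix a b c d
  show "E a b c d = F a b c d"
  proof (cases "a \<in> asgs V \<and> b \<in> asgs V \<and> c \<in> asgs V \<and> d \<in> asgs V")
    case False
    then show ?thesis using assms(2,3) unfolding is_sop_def by auto
  next
    case True
    have fin: "finite (asgs V)" using finite_asgs[OF assms(1)] .
    define H where "H = (\<lambda>x y. F a b x y - E a b x y)"
    have H_form: "quad_form (asgs V) H \<phi> = 0" for \<phi>
    proof -
      let ?A = "ketbra V (\<lambda>x. cnj (\<phi> x))"
      have "quad_form (asgs V) H \<phi> = (\<Sum>s'\<in>asgs V. \<Sum>t'\<in>asgs V. H s' t' * ?A s' t')"
        unfolding quad_form_def ketbra_def by (auto intro!: sum.cong simp: mult.commute mult.left_commute)
      also have "\<dots> = apply_sop V V F ?A a b - apply_sop V V E ?A a b"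
        using True unfolding H_def by (simp add: apply_sop_self algebra_simps sum_subtractf)
      also have "\<dots> = 0" using assms(4)[OF psd_ketbra] True by simp
      finally show ?thesis .
    qed
    then have "psd_on (asgs V) H" unfolding psd_on_def by simp
    moreover have "H x x = 0" if "x \<in> asgs V" for x
      using quad_form_single[OF fin that, of H 1] H_form by simp
    ultimately have "H c d = 0" using psd_on_eq_zero_if_diag_zero[OF _ fin] True by blast
    then show ?thesis unfolding H_def by simp
  qed
qed

text \<open>The Heisenberg-picture dual \<open>K\<^sup>*\<close> of the extension of \<open>K\<close> to \<open>H\<^sub>X\<close>.\<close>
definition dual :: "nat set \<Rightarrow> nat set \<Rightarrow> sop \<Rightarrow> op \<Rightarrow> op" where
  "dual V X K N = (\<lambda>a b. if a \<in> asgs X \<and> b \<in> asgs X then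
     (\<Sum>s\<in>asgs X. \<Sum>t\<in>asgs X. N s t * (if agree (X - V) t b \<and> agree (X - V) s a
        then K (restr V t) (restr V s) (restr V b) (restr V a) else 0)) else 0)"

lemma dual_scale: "dual V X K (\<lambda>s t. c * N s t) = (\<lambda>a b. c * dual V X K N a b)"
  unfolding dual_def by (auto simp: fun_eq_iff sum_distrib_left mult.assoc)

lemma sum_swap4:
  "(\<Sum>a\<in>A. \<Sum>b\<in>B. \<Sum>s\<in>C. \<Sum>t\<in>D. f a b s t) = (\<Sum>s\<in>C. \<Sum>t\<in>D. \<Sum>b\<in>B. \<Sum>a\<in>A. f a b s t)"
proof -
  have "(\<Sum>a\<in>A. \<Sum>b\<in>B. \<Sum>s\<in>C. \<Sum>t\<in>D. f a b s t) = (\<Sum>a\<in>A. \<Sum>s\<in>C. \<Sum>b\<in>B. \<Sum>t\<in>D. f a b s t)"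
    by (rule sum.cong[OF refl], rule sum.swap)
  also have "\<dots> = (\<Sum>s\<in>C. \<Sum>a\<in>A. \<Sum>b\<in>B. \<Sum>t\<in>D. f a b s t)" by (rule sum.swap)
  also have "\<dots> = (\<Sum>s\<in>C. \<Sum>a\<in>A. \<Sum>t\<in>D. \<Sum>b\<in>B. f a b s t)"
    by (rule sum.cong[OF refl], rule sum.cong[OF refl], rule sum.swap)
  also have "\<dots> = (\<Sum>s\<in>C. \<Sum>t\<in>D. \<Sum>a\<in>A. \<Sum>b\<in>B. f a b s t)"
    by (rule sum.cong[OF refl], rule sum.swap)
  also have "\<dots> = (\<Sum>s\<in>C. \<Sum>t\<in>D. \<Sum>b\<in>B. \<Sum>a\<in>A. f a b s t)"
    by (rule sum.cong[OF refl], rule sum.cong[OF refl], rule sum.swap)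
  finally show ?thesis .
qed

lemma tr_opmult_dual: "tr X (opmult X (dual V X K N) \<rho>) = tr X (opmult X N (apply_sop V X K \<rho>))"
proof -
  define G where "G = (\<lambda>a b s t. N s t * (if agree (X - V) t b \<and> agree (X - V) s a
        then K (restr V t) (restr V s) (restr V b) (restr V a) * \<rho> b a else 0))"
  have "tr X (opmult X (dual V X K N) \<rho>)
      = (\<Sum>a\<in>asgs X. \<Sum>b\<in>asgs X. \<Sum>s\<in>asgs X. \<Sum>t\<in>asgs X. G a b s t)"
    unfolding tr_opmult dual_def G_def by (auto simp: sum_distrib_right intro!: sum.cong)
  also have "\<dots> = (\<Sum>s\<in>asgs X. \<Sum>t\<in>asgs X. \<Sum>b\<in>asgs X. \<Sum>a\<in>asgs X. G a b s t)"
    by (rule sum_swap4)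
  also have "\<dots> = tr X (opmult X N (apply_sop V X K \<rho>))"
    unfolding tr_opmult apply_sop_def G_def by (auto simp: sum_distrib_left intro!: sum.cong)
  finally show ?thesis .
qed

lemma psd_dual:
  assumes "cp V K" "finite X" "V \<subseteq> X" "psd X N"
  shows "psd X (dual V X K N)"
  unfolding psd_iff_psd_on
proof
  show "is_op X (dual V X K N)" unfolding is_op_def dual_def by auto
  show "psd_on (asgs X) (dual V X K N)" unfolding psd_on_def
  proof
    fix \<phi>
    have "quad_form (asgs X) (dual V X K N) \<phi> = tr X (opmult X N (apply_sop V X K (ketbra X \<phi>)))"
      by (simp flip: tr_opmult_ketbra_right tr_opmult_dual)
    then show "Im (quad_form (asgs X) (dual V X K N) \<phi>) = 0 \<and> Re (quad_form (asgs X) (dual V X K N) \<phi>) \<ge> 0"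
      using psd_tr_opmult[OF assms(2,4) cp_psd[OF assms(1-3) psd_ketbra]] by simp
  qed
qed

lemma ext_op_dual:
  assumes "V \<subseteq> X" "X \<subseteq> Y" "finite Y"
  shows "ext_op X Y (dual V X K N) = dual V Y K (ext_op X Y N)"
proof (intro ext)
  fix a b
  show "ext_op X Y (dual V X K N) a b = dual V Y K (ext_op X Y N) a b"
  proof (cases "a \<in> asgs Y \<and> b \<in> asgs Y")
    case False
    then show ?thesis unfolding ext_op_def dual_def by auto
  next
    case True
    then have a: "a \<in> asgs Y" and b: "b \<in> asgs Y" by auto
    define g where "g = (\<lambda>s t. ext_op X Y N s t * (if agree (Y - V) t b \<and> agree (Y - V) s a
        then K (restr V t) (restr V s) (restr V b) (restr V a) else 0))"
    have agree_outside: "agree (Y - X) s c" if "agree (Y - V) s c" for s c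
      using that assms(1) by (auto simp: agree_def)
    have "dual V Y K (ext_op X Y N) a b = (\<Sum>s\<in>asgs Y. \<Sum>t\<in>asgs Y. g s t)"
      unfolding dual_def g_def using a b by simp
    also have "\<dots> = (\<Sum>s\<in>asgs Y. if agree (Y - X) s a
        then (\<Sum>t\<in>asgs Y. if agree (Y - X) t b then g s t else 0) else 0)"
    proof -
      have g_support: "\<And>s t. g s t = (if agree (Y - X) s a then (if agree (Y - X) t b then g s t else 0) else 0)"
        using agree_outside unfolding g_def by fastforce
      show ?thesis by (subst g_support) (simp add: sum_if_zero_const)
    qed
    also have "\<dots> = (\<Sum>\<sigma>\<in>asgs X. \<Sum>\<tau>\<in>asgs X. g (override_on a \<sigma> X) (override_on b \<tau> X))"
      by (simp add: sum_asgs_agree[OF assms(2,3) a] sum_asgs_agree[OF assms(2,3) b])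
    also have "\<dots> = (\<Sum>\<sigma>\<in>asgs X. \<Sum>\<tau>\<in>asgs X. if agree (Y - X) a b then N \<sigma> \<tau> *
        (if agree (X - V) \<tau> (restr X b) \<and> agree (X - V) \<sigma> (restr X a)
        then K (restr V \<tau>) (restr V \<sigma>) (restr V b) (restr V a) else 0) else 0)"
    proof (intro sum.cong refl)
      fix \<sigma> \<tau> assume \<sigma>: "\<sigma> \<in> asgs X" and \<tau>: "\<tau> \<in> asgs X"
      show "g (override_on a \<sigma> X) (override_on b \<tau> X) = (if agree (Y - X) a b then N \<sigma> \<tau> *
        (if agree (X - V) \<tau> (restr X b) \<and> agree (X - V) \<sigma> (restr X a)
        then K (restr V \<tau>) (restr V \<sigma>) (restr V b) (restr V a) else 0) else 0)"
        unfolding g_def ext_op_def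
        using override_on_in_asgs[OF assms(2) a \<sigma>] override_on_in_asgs[OF assms(2) b \<tau>]
          agree_override_on[OF assms(1,2) \<sigma>, of a] agree_override_on[OF assms(1,2) \<tau>, of b]
          agree_override_on_override_on restr_override_on[OF \<sigma>] restr_override_on[OF \<tau>]
          restr_override_on_subset[OF assms(1)]
        by auto
    qed
    also have "\<dots> = ext_op X Y (dual V X K N) a b"
      unfolding ext_op_def dual_def restr_restr[OF assms(1)]
      using a b restr_in_asgs[of X a] restr_in_asgs[of X b] by auto
    finally show ?thesis by simp
  qed
qed

text \<open>The total-correctness inequality for \<open>(K\<^sup>* N, N)\<close> holds with equality.\<close>
lemma tr_ext_op_dual:
  assumes "V \<subseteq> X" "X \<subseteq> Y" "finite Y"
  shows "tr Y (opmult Y (ext_op X Y (dual V X K N)) \<rho>) = tr Y (opmult Y (ext_op X Y N) (apply_sop V Y K \<rho>))"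
  unfolding ext_op_dual[OF assms] by (rule tr_opmult_dual)

section \<open>Refinement orders\<close>

lemma psd_apply_sop_diff:
  "sop_le V E F \<Longrightarrow> finite X \<Longrightarrow> V \<subseteq> X \<Longrightarrow> psd X A
    \<Longrightarrow> psd X (\<lambda>s t. apply_sop V X F A s t - apply_sop V X E A s t)"
  unfolding sop_le_def cp_def apply_sop_diff by blast

lemma ref_T_if_sop_le:
  assumes "sop_le V E F"
  shows "ref_T V E F"
  unfolding ref_T_def models_tot_def
proof (intro allI impI)
  fix W M N X \<rho>
  assume WMN: "finite W \<and> is_effect W M \<and> is_effect W N"
    and E_tot: "\<forall>X \<rho>. finite X \<and> V \<union> W \<subseteq> X \<and> is_pdo X \<rho> \<longrightarrow>
      Re (tr X (opmult X (ext_op W X M) \<rho>)) \<le> Re (tr X (opmult X (ext_op W X N) (apply_sop V X E \<rho>)))"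
    and X: "finite X \<and> V \<union> W \<subseteq> X \<and> is_pdo X \<rho>"
  have E_le: "Re (tr X (opmult X (ext_op W X M) \<rho>))
      \<le> Re (tr X (opmult X (ext_op W X N) (apply_sop V X E \<rho>)))"
    using E_tot X by blast
  have "psd X (ext_op W X N)"
    using psd_ext_op WMN X unfolding is_effect_def by auto
  moreover have "psd X (\<lambda>s t. apply_sop V X F \<rho> s t - apply_sop V X E \<rho> s t)"
    using psd_apply_sop_diff[OF assms] X unfolding is_pdo_def by auto
  ultimately have "0 \<le> Re (tr X (opmult X (ext_op W X N)
      (\<lambda>s t. apply_sop V X F \<rho> s t - apply_sop V X E \<rho> s t)))"
    using psd_tr_opmult(2) X by blast
  then show "Re (tr X (opmult X (ext_op W X M) \<rho>)) \<le> Re (tr X (opmult X (ext_op W X N) (apply_sop V X F \<rho>)))"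
    using E_le unfolding tr_opmult_diff_right by simp
qed

text \<open>The partial-correctness inequality for \<open>(M, N)\<close> is the total one for \<open>(I - M, I - N)\<close>
  read backwards, so the defect \<open>tr ((I - N) (E - F) \<rho>) \<ge> 0\<close> is what is needed.\<close>
lemma ref_P_if_sop_le:
  assumes "sop_le V F E"
  shows "ref_P V E F"
  unfolding ref_P_def models_par_def
proof (intro allI impI)
  fix W M N X \<rho>
  assume WMN: "finite W \<and> is_effect W M \<and> is_effect W N"
    and E_par: "\<forall>X \<rho>. finite X \<and> V \<union> W \<subseteq> X \<and> is_pdo X \<rho> \<longrightarrow>
      Re (tr X (opmult X (ext_op W X M) \<rho>)) \<le> Re (tr X (opmult X (ext_op W X N) (apply_sop V X E \<rho>)))
        + Re (tr X \<rho>) - Re (tr X (apply_sop V X E \<rho>))"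
    and X: "finite X \<and> V \<union> W \<subseteq> X \<and> is_pdo X \<rho>"
  have WX: "W \<subseteq> X" and fin: "finite X" using X by auto
  have E_le: "Re (tr X (opmult X (ext_op W X M) \<rho>)) \<le> Re (tr X (opmult X (ext_op W X N) (apply_sop V X E \<rho>)))
      + Re (tr X \<rho>) - Re (tr X (apply_sop V X E \<rho>))"
    using E_par X by blast
  have "psd X (ext_op W X (\<lambda>s t. idop W s t - N s t))"
    using psd_ext_op WMN X unfolding is_effect_def by auto
  moreover have "psd X (\<lambda>s t. apply_sop V X E \<rho> s t - apply_sop V X F \<rho> s t)"
    using psd_apply_sop_diff[OF assms] X unfolding is_pdo_def by auto
  ultimately have "0 \<le> Re (tr X (opmult X (ext_op W X (\<lambda>s t. idop W s t - N s t))
      (\<lambda>s t. apply_sop V X E \<rho> s t - apply_sop V X F \<rho> s t)))"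
    using psd_tr_opmult(2) fin by blast
  also have "tr X (opmult X (ext_op W X (\<lambda>s t. idop W s t - N s t))
      (\<lambda>s t. apply_sop V X E \<rho> s t - apply_sop V X F \<rho> s t))
     = (tr X (apply_sop V X E \<rho>) - tr X (apply_sop V X F \<rho>))
       - (tr X (opmult X (ext_op W X N) (apply_sop V X E \<rho>)) - tr X (opmult X (ext_op W X N) (apply_sop V X F \<rho>)))"
    unfolding ext_op_idop_minus[OF WX] tr_opmult_idop_minus[OF fin] tr_diff tr_opmult_diff_right
    by (simp add: algebra_simps)
  finally show "Re (tr X (opmult X (ext_op W X M) \<rho>)) \<le> Re (tr X (opmult X (ext_op W X N) (apply_sop V X F \<rho>)))
      + Re (tr X \<rho>) - Re (tr X (apply_sop V X F \<rho>))"
    using E_le by simp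
qed

lemma sop_le_if_quad_form_le:
  assumes "cp V E" "cp V F"
    and "\<And>X \<rho> \<psi>. finite X \<Longrightarrow> V \<subseteq> X \<Longrightarrow> is_pdo X \<rho>
      \<Longrightarrow> Re (quad_form (asgs X) (apply_sop V X E \<rho>) \<psi>) \<le> Re (quad_form (asgs X) (apply_sop V X F \<rho>) \<psi>)"
  shows "sop_le V E F"
  unfolding sop_le_def cp_def apply_sop_diff
proof (intro allI impI)
  fix X A assume "finite X \<and> V \<subseteq> X" "psd X A"
  then have fin: "finite X" and VX: "V \<subseteq> X" and A: "psd X A" by auto
  obtain d where d: "d > 0" "is_pdo X (\<lambda>s t. of_real d * A s t)"
    using psd_scale_pdo[OF A fin] by blast
  show "psd X (\<lambda>s t. apply_sop V X F A s t - apply_sop V X E A s t)"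
    unfolding psd_iff_psd_on psd_on_def quad_form_diff
  proof (intro conjI allI)
    show "is_op X (\<lambda>s t. apply_sop V X F A s t - apply_sop V X E A s t)"
      using apply_sop_is_op unfolding is_op_def by simp
    fix \<psi>
    have "d * Re (quad_form (asgs X) (apply_sop V X E A) \<psi>) \<le> d * Re (quad_form (asgs X) (apply_sop V X F A) \<psi>)"
      using assms(3)[OF fin VX d(2), of \<psi>] unfolding apply_sop_scale quad_form_scale by simp
    then show "0 \<le> Re (quad_form (asgs X) (apply_sop V X F A) \<psi> - quad_form (asgs X) (apply_sop V X E A) \<psi>)"
      using d(1) by simp
    have "psd X (apply_sop V X E A)" "psd X (apply_sop V X F A)"
      using cp_psd[OF assms(1) fin VX A] cp_psd[OF assms(2) fin VX A] .
    then show "Im (quad_form (asgs X) (apply_sop V X F A) \<psi> - quad_form (asgs X) (apply_sop V X E A) \<psi>) = 0"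
      unfolding psd_iff_psd_on psd_on_def by simp
  qed
qed

lemma dual_ketbra_effects:
  assumes "cp V K" "finite X" "V \<subseteq> X"
  obtains c where "c > 0" "is_effect X (\<lambda>s t. of_real c * ketbra X \<psi> s t)"
    "is_effect X (dual V X K (\<lambda>s t. of_real c * ketbra X \<psi> s t))"
proof -
  obtain c where "c > 0" "is_effect X (\<lambda>s t. of_real c * dual V X K (ketbra X \<psi>) s t)"
    "is_effect X (\<lambda>s t. of_real c * ketbra X \<psi> s t)"
    using psd_scale_effects[OF psd_dual[OF assms psd_ketbra] psd_ketbra assms(2)] by blast
  then show ?thesis using that[of c] unfolding dual_scale by blast
qed

lemma is_effect_is_op: "is_effect X M \<Longrightarrow> is_op X M"
  unfolding is_effect_def psd_def by blast

lemma sop_le_if_ref_T: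
  assumes "E \<in> DProg V" "F \<in> DProg V" "ref_T V E F"
  shows "sop_le V E F"
proof (rule sop_le_if_quad_form_le[OF DProgD(2)[OF assms(1)] DProgD(2)[OF assms(2)]])
  fix X \<rho> \<psi> assume X: "finite X" "V \<subseteq> X" "is_pdo X \<rho>"
  obtain c where c: "c > 0" and effects: "is_effect X (\<lambda>s t. of_real c * ketbra X \<psi> s t)"
    "is_effect X (dual V X E (\<lambda>s t. of_real c * ketbra X \<psi> s t))"
    using dual_ketbra_effects[OF DProgD(2)[OF assms(1)] X(1,2)] by blast
  define N where "N = (\<lambda>s t. of_real c * ketbra X \<psi> s t)"
  have N: "is_effect X N" and M: "is_effect X (dual V X E N)"
    using effects unfolding N_def by auto
  have "models_tot V E X (dual V X E N) N"
    unfolding models_tot_def using tr_ext_op_dual[OF X(2)] by simp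
  then have "models_tot V F X (dual V X E N) N"
    using assms(3) M N X(1) unfolding ref_T_def by blast
  then have "Re (tr X (opmult X (ext_op X X (dual V X E N)) \<rho>))
      \<le> Re (tr X (opmult X (ext_op X X N) (apply_sop V X F \<rho>)))"
    using X unfolding models_tot_def by blast
  then have "Re (tr X (opmult X N (apply_sop V X E \<rho>))) \<le> Re (tr X (opmult X N (apply_sop V X F \<rho>)))"
    unfolding ext_op_self[OF is_effect_is_op[OF M]] ext_op_self[OF is_effect_is_op[OF N]] tr_opmult_dual .
  then show "Re (quad_form (asgs X) (apply_sop V X E \<rho>) \<psi>) \<le> Re (quad_form (asgs X) (apply_sop V X F \<rho>) \<psi>)"
    using c unfolding N_def tr_opmult_scale_left tr_opmult_ketbra_left by simp
qed

lemma sop_le_if_ref_P: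
  assumes "E \<in> DProg V" "F \<in> DProg V" "ref_P V E F"
  shows "sop_le V F E"
proof (rule sop_le_if_quad_form_le[OF DProgD(2)[OF assms(2)] DProgD(2)[OF assms(1)]])
  fix X \<rho> \<psi> assume X: "finite X" "V \<subseteq> X" "is_pdo X \<rho>"
  obtain c where c: "c > 0" and effects: "is_effect X (\<lambda>s t. of_real c * ketbra X \<psi> s t)"
    "is_effect X (dual V X E (\<lambda>s t. of_real c * ketbra X \<psi> s t))"
    using dual_ketbra_effects[OF DProgD(2)[OF assms(1)] X(1,2)] by blast
  define N where "N = (\<lambda>s t. of_real c * ketbra X \<psi> s t)"
  have N: "is_effect X N" and M: "is_effect X (dual V X E N)"
    using effects unfolding N_def by auto
  define M' where "M' = (\<lambda>s t. idop X s t - dual V X E N s t)"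
  define N' where "N' = (\<lambda>s t. idop X s t - N s t)"
  have "models_par V E X M' N'"
    unfolding models_par_def M'_def N'_def
    using ext_op_idop_minus tr_opmult_idop_minus tr_ext_op_dual[OF X(2)] by simp
  then have "models_par V F X M' N'"
    using assms(3) is_effect_compl[OF M] is_effect_compl[OF N] X(1) unfolding ref_P_def M'_def N'_def by blast
  then have "Re (tr X (opmult X (ext_op X X M') \<rho>))
      \<le> Re (tr X (opmult X (ext_op X X N') (apply_sop V X F \<rho>))) + Re (tr X \<rho>) - Re (tr X (apply_sop V X F \<rho>))"
    using X unfolding models_par_def by blast
  then have "Re (tr X (opmult X N (apply_sop V X F \<rho>))) \<le> Re (tr X (opmult X N (apply_sop V X E \<rho>)))"
    unfolding M'_def N'_def ext_op_idop_minus[OF order_refl] tr_opmult_idop_minus[OF X(1)]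
      ext_op_self[OF is_effect_is_op[OF M]] ext_op_self[OF is_effect_is_op[OF N]] tr_opmult_dual
    by simp
  then show "Re (quad_form (asgs X) (apply_sop V X F \<rho>) \<psi>) \<le> Re (quad_form (asgs X) (apply_sop V X E \<rho>) \<psi>)"
    using c unfolding N_def tr_opmult_scale_left tr_opmult_ketbra_left by simp
qed

lemma sop_le_refl: "sop_le V E E"
  unfolding sop_le_def cp_def by (simp add: apply_sop_zero psd_zero)

text \<open>A positive operator \<open>F(A) - E(A)\<close> with nonpositive trace vanishes.\<close>
lemma sop_eq_if_sop_le_tr_le:
  assumes "finite V" "E \<in> DProg V" "F \<in> DProg V" "sop_le V E F"
    and "\<And>A. psd V A \<Longrightarrow> Re (tr V (apply_sop V V F A)) \<le> Re (tr V (apply_sop V V E A))"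
  shows "E = F"
proof (rule sop_eqI[OF assms(1) DProgD(1)[OF assms(2)] DProgD(1)[OF assms(3)]])
  fix A s t assume A: "psd V A" and st: "s \<in> asgs V" "t \<in> asgs V"
  define G where "G = (\<lambda>s t. apply_sop V V F A s t - apply_sop V V E A s t)"
  have fin: "finite (asgs V)" using finite_asgs[OF assms(1)] .
  have G: "psd_on (asgs V) G"
    using psd_apply_sop_diff[OF assms(4,1) order_refl A] unfolding G_def psd_iff_psd_on by blast
  have "(\<Sum>u\<in>asgs V. Re (G u u)) = Re (tr V G)" unfolding tr_def by (simp add: Re_sum)
  also have "\<dots> \<le> 0" using assms(5)[OF A] unfolding G_def tr_diff by simp
  finally have "\<forall>u\<in>asgs V. Re (G u u) = 0"
    using sum_nonneg_eq_0_iff[OF fin] psd_on_diag(2)[OF G fin]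
    by (metis (no_types, lifting) order_antisym sum_nonneg)
  then have "G u u = 0" if "u \<in> asgs V" for u
    using psd_on_diag(1)[OF G fin that] that by (simp add: complex_eq_iff)
  then have "G s t = 0" using psd_on_eq_zero_if_diag_zero[OF G fin _ st] by blast
  then show "apply_sop V V E A s t = apply_sop V V F A s t" unfolding G_def by simp
qed

lemma sop_le_antisym:
  assumes "finite V" "E \<in> DProg V" "F \<in> DProg V" "sop_le V E F" "sop_le V F E"
  shows "E = F"
proof (rule sop_eq_if_sop_le_tr_le[OF assms(1-4)])
  fix A assume "psd V A"
  then have "Re (tr V (\<lambda>s t. apply_sop V V E A s t - apply_sop V V F A s t)) \<ge> 0"
    using tr_psd(2) psd_apply_sop_diff[OF assms(5,1) order_refl] assms(1) by blast
  then show "Re (tr V (apply_sop V V F A)) \<le> Re (tr V (apply_sop V V E A))"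
    unfolding tr_diff by simp
qed

lemma sop_eq_if_sop_le_trace_pres:
  assumes "finite V" "E \<in> DProg V" "F \<in> DProg V" "sop_le V E F" "trace_pres V E" "trace_pres V F"
  shows "E = F"
  using assms by (intro sop_eq_if_sop_le_tr_le) (auto simp: trace_pres_def)

theorem theorem4p2:
  fixes V :: "nat set" and E F :: sop
  assumes "finite V" and "E \<in> DProg V" and "F \<in> DProg V"
  shows "(ref_T V E F \<longleftrightarrow> sop_le V E F)
       \<and> (ref_P V E F \<longleftrightarrow> sop_le V F E)
       \<and> (equiv_T V E F \<longleftrightarrow> equiv_P V E F) \<and> (equiv_P V E F \<longleftrightarrow> E = F)
       \<and> (trace_pres V E \<and> trace_pres V F \<longrightarrow>
            (ref_T V E F \<longleftrightarrow> ref_P V E F) \<and> (ref_P V E F \<longleftrightarrow> E = F))"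
proof -
  have T: "ref_T V G H \<longleftrightarrow> sop_le V G H" and P: "ref_P V G H \<longleftrightarrow> sop_le V H G"
    if "G \<in> DProg V" "H \<in> DProg V" for G H
    using that ref_T_if_sop_le sop_le_if_ref_T ref_P_if_sop_le sop_le_if_ref_P by blast+
  have antisym: "sop_le V E F \<and> sop_le V F E \<longleftrightarrow> E = F"
    using sop_le_antisym[OF assms] sop_le_refl by blast
  have "sop_le V E F \<longleftrightarrow> E = F" "sop_le V F E \<longleftrightarrow> E = F" if "trace_pres V E \<and> trace_pres V F"
    using sop_eq_if_sop_le_trace_pres[OF assms] sop_eq_if_sop_le_trace_pres[OF assms(1,3,2)] that sop_le_refl
    by metis+
  then show ?thesis
    unfolding equiv_T_def equiv_P_def using T[OF assms(2,3)] T[OF assms(3,2)] P[OF assms(2,3)] P[OF assms(3,2)] antisym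
    by blast
qed

end
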